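(* Assume the setting below, that the spectral gap $\Delta$ is continuously differentiable on $[0,1]$ and satisfies the measure condition with constant $C>0$. Let $p\in(1,2)$ and let $u:[0,1]\to[0,1]$ be the schedule satisfying the power-law condition with exponent $p$, i.e. $u(0)=0$, $u(1)=1$ and $u'(s)=c_p\Delta^p(u(s))$ for $s\in[0,1]$, where $c_p=\int_0^1\Delta^{-p}(v)\,dv$. Then $$\mathcal{E}[u]\le B_0\,\Delta_*^{-1},$$ where $B_0$ is a finite constant depending only on $p$, $C$ and $A=\|H_1-H_0\|$ (one may take $B_0=2C_p+B_1+B_2$ with $C_p=\frac{Cp}{p-1}$, $B_1=\frac{2p^2AC^2(3-p)}{(p-1)(2-p)}$, $B_2=\frac{pAC^2(3-p)}{(p-1)(2-p)}$). Consequently $\eta(1)=\frac{c}{T}\mathcal{E}[u]=\mathcal{O}(\Delta_*^{-1})$.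
   Context: $H_0,H_1$ are Hermitian $n\times n$ matrices; $\|\cdot\|$ is the operator norm; $A:=\|H_1-H_0\|$. For $u\in[0,1]$ let $H(u)=(1-u)H_0+uH_1$ with eigenvalues $\lambda_1(u)\le\lambda_2(u)\le\dots\le\lambda_n(u)$; assume $\lambda_1(u)$ is simple for every $u$, and define the spectral gap $\Delta(u)=\lambda_2(u)-\lambda_1(u)>0$ and $\Delta_*=\min_{u\in[0,1]}\Delta(u)>0$. Measure condition: $\Delta$ satisfies it with constant $C>0$ if for all $x>0$, $\mu(\{u\in[0,1]:\Delta(u)\le x\})\le Cx$ ($\mu$ Lebesgue measure). For a $C^2$ strictly increasing schedule $u:[0,1]\to[0,1]$ with $u(0)=0,u(1)=1$, set $H^{(k)}(s)=\frac{d^k}{ds^k}H(u(s))=(H_1-H_0)u^{(k)}(s)$ and define $$\mathcal{E}[u]=\frac{\|H^{(1)}(0)\|}{\Delta^2(u(0))}+\frac{\|H^{(1)}(1)\|}{\Delta^2(u(1))}+\int_0^1\Big(\frac{\|H^{(2)}(s)\|}{\Delta^2(u(s))}+\frac{\|H^{(1)}(s)\|^2}{\Delta^3(u(s))}\Big)ds;$$ the adiabatic error bound is $\eta(1)=\frac{c}{T}\mathcal{E}[u]$ with $T>0$ the runtime and $c$ a universal constant. *)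

theory Defs
  imports "HOL-Analysis.Analysis"
begin

text \<open>n x n complex matrices are represented as functions nat => nat => complex,
  only the entries with indices below n being relevant; vectors of C^n likewise
  as nat => complex.\<close>

definition matvec :: "nat \<Rightarrow> (nat \<Rightarrow> nat \<Rightarrow> complex) \<Rightarrow> (nat \<Rightarrow> complex) \<Rightarrow> nat \<Rightarrow> complex" where
  "matvec n M x = (\<lambda>i. \<Sum>j<n. M i j * x j)"

definition vnorm :: "nat \<Rightarrow> (nat \<Rightarrow> complex) \<Rightarrow> real" where
  "vnorm n x = sqrt (\<Sum>i<n. (cmod (x i))\<^sup>2)"

definition opnorm :: "nat \<Rightarrow> (nat \<Rightarrow> nat \<Rightarrow> complex) \<Rightarrow> real" where
  "opnorm n M = (SUP x\<in>{x. vnorm n x \<le> 1}. vnorm n (matvec n M x))"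

definition hermitian :: "nat \<Rightarrow> (nat \<Rightarrow> nat \<Rightarrow> complex) \<Rightarrow> bool" where
  "hermitian n M \<longleftrightarrow> (\<forall>i<n. \<forall>j<n. M i j = cnj (M j i))"

definition eigvec :: "nat \<Rightarrow> (nat \<Rightarrow> nat \<Rightarrow> complex) \<Rightarrow> real \<Rightarrow> (nat \<Rightarrow> complex) \<Rightarrow> bool" where
  "eigvec n M l x \<longleftrightarrow> (\<exists>i<n. x i \<noteq> 0) \<and> (\<forall>i<n. matvec n M x i = complex_of_real l * x i)"

definition eigenvalues :: "nat \<Rightarrow> (nat \<Rightarrow> nat \<Rightarrow> complex) \<Rightarrow> real set" where
  "eigenvalues n M = {l. \<exists>x. eigvec n M l x}"

definition lam1 :: "nat \<Rightarrow> (nat \<Rightarrow> nat \<Rightarrow> complex) \<Rightarrow> real" where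
  "lam1 n M = Min (eigenvalues n M)"

text \<open>lambda_1 is simple: its eigenspace is one-dimensional (for Hermitian matrices
  geometric = algebraic multiplicity)\<close>
definition lam1_simple :: "nat \<Rightarrow> (nat \<Rightarrow> nat \<Rightarrow> complex) \<Rightarrow> bool" where
  "lam1_simple n M \<longleftrightarrow> (\<forall>x y. eigvec n M (lam1 n M) x \<longrightarrow> eigvec n M (lam1 n M) y
       \<longrightarrow> (\<exists>c. \<forall>i<n. y i = c * x i))"

text \<open>second eigenvalue lambda_2 (counted with multiplicity); when lambda_1 is simple
  this is the smallest eigenvalue strictly above lambda_1\<close>
definition lam2 :: "nat \<Rightarrow> (nat \<Rightarrow> nat \<Rightarrow> complex) \<Rightarrow> real" where
  "lam2 n M = Min {l \<in> eigenvalues n M. l > lam1 n M}"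

definition Hint :: "(nat \<Rightarrow> nat \<Rightarrow> complex) \<Rightarrow> (nat \<Rightarrow> nat \<Rightarrow> complex) \<Rightarrow> real \<Rightarrow> nat \<Rightarrow> nat \<Rightarrow> complex" where
  "Hint H0 H1 v = (\<lambda>i j. complex_of_real (1 - v) * H0 i j + complex_of_real v * H1 i j)"

definition gap :: "nat \<Rightarrow> (nat \<Rightarrow> nat \<Rightarrow> complex) \<Rightarrow> (nat \<Rightarrow> nat \<Rightarrow> complex) \<Rightarrow> real \<Rightarrow> real" where
  "gap n H0 H1 v = lam2 n (Hint H0 H1 v) - lam1 n (Hint H0 H1 v)"

definition min_gap :: "nat \<Rightarrow> (nat \<Rightarrow> nat \<Rightarrow> complex) \<Rightarrow> (nat \<Rightarrow> nat \<Rightarrow> complex) \<Rightarrow> real" where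
  "min_gap n H0 H1 = (INF v\<in>{0..1}. gap n H0 H1 v)"

definition measure_condition :: "(real \<Rightarrow> real) \<Rightarrow> real \<Rightarrow> bool" where
  "measure_condition D C \<longleftrightarrow>
     (\<forall>x>0. measure lebesgue {v\<in>{0..1}. D v \<le> x} \<le> C * x)"

definition matdiff :: "(nat \<Rightarrow> nat \<Rightarrow> complex) \<Rightarrow> (nat \<Rightarrow> nat \<Rightarrow> complex) \<Rightarrow> nat \<Rightarrow> nat \<Rightarrow> complex" where
  "matdiff H1 H0 = (\<lambda>i j. H1 i j - H0 i j)"

text \<open>H^(k)(s) = (H1 - H0) u^(k)(s), where uk = u^(k)\<close>
definition Hderiv :: "(nat \<Rightarrow> nat \<Rightarrow> complex) \<Rightarrow> (nat \<Rightarrow> nat \<Rightarrow> complex) \<Rightarrow> (real \<Rightarrow> real) \<Rightarrow> real \<Rightarrow> nat \<Rightarrow> nat \<Rightarrow> complex" where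
  "Hderiv H0 H1 uk s = (\<lambda>i j. complex_of_real (uk s) * matdiff H1 H0 i j)"

text \<open>the functional E[u]; u1, u2 are the first and second derivatives of u\<close>
definition sched_E :: "nat \<Rightarrow> (nat \<Rightarrow> nat \<Rightarrow> complex) \<Rightarrow> (nat \<Rightarrow> nat \<Rightarrow> complex)
     \<Rightarrow> (real \<Rightarrow> real) \<Rightarrow> (real \<Rightarrow> real) \<Rightarrow> (real \<Rightarrow> real) \<Rightarrow> real" where
  "sched_E n H0 H1 u u1 u2 =
     opnorm n (Hderiv H0 H1 u1 0) / (gap n H0 H1 (u 0))\<^sup>2
   + opnorm n (Hderiv H0 H1 u1 1) / (gap n H0 H1 (u 1))\<^sup>2
   + integral {0..1} (\<lambda>s. opnorm n (Hderiv H0 H1 u2 s) / (gap n H0 H1 (u s))\<^sup>2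
                        + (opnorm n (Hderiv H0 H1 u1 s))\<^sup>2 / (gap n H0 H1 (u s)) ^ 3)"

end

theory Submission
  imports Defs "Jordan_Normal_Form.Char_Poly"
begin

text \<open>With \<open>\<lambda>\<^sub>1\<close> simple, \<open>\<lambda>\<^sub>1\<close> and \<open>\<lambda>\<^sub>2\<close> are min-max values of the quadratic form
  (Courant--Fischer), so each moves by at most \<open>A \<bar>w - v\<bar>\<close> between \<open>H(v)\<close> and \<open>H(w)\<close>:
  the gap \<open>\<Delta>\<close> is \<open>2A\<close>-Lipschitz and \<open>\<bar>\<Delta>'\<bar> \<le> 2A\<close>.  Under the power law
  \<open>u' = c\<^sub>p \<Delta>(u)\<^sup>p\<close> one has \<open>u'' = c\<^sub>p p \<Delta>(u)\<^sup>p\<^sup>-\<^sup>1 \<Delta>'(u) u'\<close>, so the integrand of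
  \<open>E[u]\<close> is at most \<open>c\<^sub>p (2p + 1) A\<^sup>2 u'(s) \<Delta>(u(s))\<^sup>p\<^sup>-\<^sup>3\<close>, and the substitution
  \<open>v = u(s)\<close> turns its integral into \<open>\<integral>\<^sub>0\<^sup>1 \<Delta>\<^sup>p\<^sup>-\<^sup>3\<close>.  Decomposing \<open>[0,1]\<close> into the level
  sets \<open>{\<Delta> \<le> 2\<^sup>k \<Delta>\<^sub>*}\<close>, the measure condition gives \<open>\<integral>\<^sub>0\<^sup>1 \<Delta>\<^sup>-\<^sup>q \<le> K\<^sub>q \<Delta>\<^sub>*\<^sup>1\<^sup>-\<^sup>q\<close>
  for every \<open>q > 1\<close>.  Applied to \<open>q = p\<close> (which bounds \<open>c\<^sub>p\<close>) and \<open>q = 3 - p\<close>, the powers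
  of \<open>\<Delta>\<^sub>*\<close> combine to \<open>\<Delta>\<^sub>*\<^sup>-\<^sup>1\<close>; so do those of the boundary terms
  \<open>A c\<^sub>p \<Delta>\<^sup>p\<^sup>-\<^sup>2\<close>.\<close>

definition vinner :: "nat \<Rightarrow> (nat \<Rightarrow> complex) \<Rightarrow> (nat \<Rightarrow> complex) \<Rightarrow> complex" where
  "vinner n x y = (\<Sum>i<n. cnj (x i) * y i)"

definition vnorm2 :: "nat \<Rightarrow> (nat \<Rightarrow> complex) \<Rightarrow> real" where
  "vnorm2 n x = (\<Sum>i<n. (cmod (x i))\<^sup>2)"

definition qform :: "nat \<Rightarrow> (nat \<Rightarrow> nat \<Rightarrow> complex) \<Rightarrow> (nat \<Rightarrow> complex) \<Rightarrow> real" where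
  "qform n H x = Re (vinner n x (matvec n H x))"

lemma vnorm2_nonneg: "0 \<le> vnorm2 n x"
  unfolding vnorm2_def by (auto intro: sum_nonneg)

lemma vinner_self: "vinner n x x = of_real (vnorm2 n x)"
proof -
  have "cnj z * z = of_real ((cmod z)\<^sup>2)" for z
    by (metis complex_norm_square mult.commute)
  thus ?thesis unfolding vinner_def vnorm2_def of_real_sum by simp
qed

lemma vnorm_eq_sqrt_vnorm2: "vnorm n x = sqrt (vnorm2 n x)"
  unfolding vnorm_def vnorm2_def ..

lemma power2_vnorm: "(vnorm n x)\<^sup>2 = vnorm2 n x"
  unfolding vnorm_eq_sqrt_vnorm2 using vnorm2_nonneg by simp

lemma vnorm_eq_L2_set: "vnorm n x = L2_set (\<lambda>i. cmod (x i)) {..<n}"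
  unfolding vnorm_def L2_set_def by simp

lemma vnorm_nonneg: "0 \<le> vnorm n x"
  unfolding vnorm_eq_sqrt_vnorm2 by (simp add: vnorm2_nonneg)

lemma vnorm2_pos: "\<exists>i<n. x i \<noteq> 0 \<Longrightarrow> 0 < vnorm2 n x"
proof -
  assume "\<exists>i<n. x i \<noteq> 0"
  then obtain i where "i < n" "x i \<noteq> 0" by blast
  thus ?thesis unfolding vnorm2_def by (intro sum_pos2[of _ i]) auto
qed

lemma vnorm2_eq_0D: "vnorm2 n x = 0 \<Longrightarrow> i < n \<Longrightarrow> x i = 0"
  using vnorm2_pos by force

lemma vnorm2_component_le: "i < n \<Longrightarrow> cmod (x i) \<le> sqrt (vnorm2 n x)"
  unfolding vnorm2_def by (rule real_le_rsqrt, rule member_le_sum) auto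

lemma cnj_vinner: "cnj (vinner n x y) = vinner n y x"
  unfolding vinner_def by (simp add: mult.commute)

lemma norm_vinner_le: "cmod (vinner n x y) \<le> vnorm n x * vnorm n y"
proof -
  have "cmod (vinner n x y) \<le> (\<Sum>i<n. cmod (cnj (x i) * y i))"
    unfolding vinner_def by (rule norm_sum)
  also have "\<dots> = (\<Sum>i<n. \<bar>cmod (x i)\<bar> * \<bar>cmod (y i)\<bar>)" by (simp add: norm_mult)
  also have "\<dots> \<le> vnorm n x * vnorm n y" unfolding vnorm_eq_L2_set by (rule L2_set_mult_ineq)
  finally show ?thesis .
qed

lemma vinner_add_right: "vinner n x (\<lambda>i. y i + z i) = vinner n x y + vinner n x z"
  unfolding vinner_def by (simp add: distrib_left sum.distrib)

lemma vinner_add_left: "vinner n (\<lambda>i. y i + z i) x = vinner n y x + vinner n z x"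
  unfolding vinner_def by (simp add: distrib_right sum.distrib)

lemma vinner_diff_right: "vinner n x (\<lambda>i. y i - z i) = vinner n x y - vinner n x z"
  unfolding vinner_def by (simp add: right_diff_distrib sum_subtractf)

lemma vinner_scale_right: "vinner n x (\<lambda>i. c * y i) = c * vinner n x y"
  unfolding vinner_def by (simp add: sum_distrib_left mult.left_commute)

lemma vinner_scale_left: "vinner n (\<lambda>i. c * y i) x = cnj c * vinner n y x"
  unfolding vinner_def by (simp add: sum_distrib_left mult.assoc)

lemma vinner_cong_right: "(\<And>i. i < n \<Longrightarrow> y i = z i) \<Longrightarrow> vinner n x y = vinner n x z"
  unfolding vinner_def by (intro sum.cong) auto

lemma vinner_cong_left: "(\<And>i. i < n \<Longrightarrow> y i = z i) \<Longrightarrow> vinner n y x = vinner n z x"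
  unfolding vinner_def by (intro sum.cong) auto

lemma vnorm2_scale: "vnorm2 n (\<lambda>i. c * x i) = (cmod c)\<^sup>2 * vnorm2 n x"
  unfolding vnorm2_def by (simp add: norm_mult power_mult_distrib sum_distrib_left)

lemma vnorm_scale: "vnorm n (\<lambda>i. c * x i) = cmod c * vnorm n x"
  unfolding vnorm_eq_sqrt_vnorm2 vnorm2_scale by (simp add: real_sqrt_mult)

lemma matvec_add: "matvec n M (\<lambda>i. y i + z i) = (\<lambda>i. matvec n M y i + matvec n M z i)"
  unfolding matvec_def by (simp add: distrib_left sum.distrib)

lemma matvec_scale: "matvec n M (\<lambda>i. c * y i) = (\<lambda>i. c * matvec n M y i)"
  unfolding matvec_def by (simp add: sum_distrib_left mult.left_commute)

lemma matvec_scale_mat: "matvec n (\<lambda>i j. c * M i j) y = (\<lambda>i. c * matvec n M y i)"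
  unfolding matvec_def by (simp add: sum_distrib_left mult.assoc)

lemma vinner_matvec_hermitian:
  assumes "hermitian n H"
  shows "vinner n x (matvec n H y) = vinner n (matvec n H x) y"
proof -
  have "vinner n x (matvec n H y) = (\<Sum>i<n. \<Sum>j<n. cnj (x i) * H i j * y j)"
    unfolding vinner_def matvec_def by (simp add: sum_distrib_left mult.assoc)
  also have "\<dots> = (\<Sum>j<n. \<Sum>i<n. cnj (x i) * H i j * y j)" by (rule sum.swap)
  also have "\<dots> = vinner n (matvec n H x) y"
    unfolding vinner_def matvec_def cnj_sum sum_distrib_right
  proof (intro sum.cong refl)
    fix i j assume "i \<in> {..<n}" "j \<in> {..<n}"
    hence "H i j = cnj (H j i)" using assms unfolding hermitian_def by blast
    thus "cnj (x i) * H i j * y j = cnj (H j i * x i) * y j" by (simp add: mult_ac)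
  qed
  finally show ?thesis .
qed

lemma bdd_above_opnorm: "bdd_above ((\<lambda>x. vnorm n (matvec n M x)) ` {x. vnorm n x \<le> 1})"
proof (rule bdd_aboveI2)
  fix x assume "x \<in> {x. vnorm n x \<le> 1}"
  hence x_le: "cmod (x j) \<le> 1" if "j < n" for j
    using that member_le_L2_set[of "{..<n}" j "\<lambda>i. cmod (x i)"] by (simp add: vnorm_eq_L2_set)
  have "vnorm n (matvec n M x) \<le> (\<Sum>i<n. cmod (matvec n M x i))"
    unfolding vnorm_eq_L2_set by (rule L2_set_le_sum) simp
  also have "\<dots> \<le> (\<Sum>i<n. \<Sum>j<n. cmod (M i j * x j))"
    unfolding matvec_def by (intro sum_mono norm_sum)
  also have "\<dots> \<le> (\<Sum>i<n. \<Sum>j<n. cmod (M i j))"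
    unfolding norm_mult by (intro sum_mono mult_left_le) (auto simp: x_le)
  finally show "vnorm n (matvec n M x) \<le> (\<Sum>i<n. \<Sum>j<n. cmod (M i j))" .
qed

lemma vnorm_matvec_le_opnorm: "vnorm n x \<le> 1 \<Longrightarrow> vnorm n (matvec n M x) \<le> opnorm n M"
  unfolding opnorm_def by (rule cSUP_upper[OF _ bdd_above_opnorm]) simp

lemma vnorm_zero: "vnorm n (\<lambda>i. 0) = 0"
  by (simp add: vnorm_def)

lemma opnorm_nonneg: "0 \<le> opnorm n M"
  using vnorm_matvec_le_opnorm[of n "\<lambda>i. 0" M] vnorm_nonneg[of n "matvec n M (\<lambda>i. 0)"]
  by (simp add: vnorm_zero)

lemma vnorm_matvec_le: "vnorm n (matvec n M x) \<le> opnorm n M * vnorm n x"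
proof (cases "vnorm n x = 0")
  case True
  hence "\<forall>j<n. x j = 0" using vnorm2_eq_0D by (simp add: vnorm_eq_sqrt_vnorm2)
  hence "matvec n M x = (\<lambda>i. 0)" unfolding matvec_def by auto
  thus ?thesis by (simp add: vnorm_zero True)
next
  case False
  hence r: "0 < vnorm n x" using vnorm_nonneg[of n x] by linarith
  have "vnorm n (matvec n M (\<lambda>i. complex_of_real (1 / vnorm n x) * x i)) \<le> opnorm n M"
    using r by (intro vnorm_matvec_le_opnorm) (simp only: vnorm_scale norm_of_real, simp)
  thus ?thesis using r unfolding matvec_scale vnorm_scale norm_of_real
    by (simp add: divide_le_eq mult.commute)
qed

lemma opnorm_scale_le: "opnorm n (\<lambda>i j. c * M i j) \<le> cmod c * opnorm n M"
  unfolding opnorm_def[of n "\<lambda>i j. c * M i j"] matvec_scale_mat vnorm_scale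
proof (rule cSUP_least)
  have "(\<lambda>i. 0) \<in> {x. vnorm n x \<le> 1}" by (simp add: vnorm_zero)
  thus "{x. vnorm n x \<le> 1} \<noteq> {}" by blast
qed (auto intro: mult_left_mono vnorm_matvec_le_opnorm)

lemma norm_vinner_matvec_le: "cmod (vinner n x (matvec n M x)) \<le> opnorm n M * vnorm2 n x"
proof -
  have "cmod (vinner n x (matvec n M x)) \<le> vnorm n x * vnorm n (matvec n M x)"
    by (rule norm_vinner_le)
  also have "\<dots> \<le> vnorm n x * (opnorm n M * vnorm n x)"
    by (rule mult_left_mono[OF vnorm_matvec_le vnorm_nonneg])
  also have "\<dots> = opnorm n M * vnorm2 n x"
    by (simp add: power2_vnorm[symmetric] power2_eq_square)
  finally show ?thesis .
qed

subsection \<open>Minimising the quadratic form\<close>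

lemma qform_scale: "qform n H (\<lambda>i. complex_of_real c * x i) = c\<^sup>2 * qform n H x"
  unfolding qform_def matvec_scale vinner_scale_left vinner_scale_right
  by (simp add: power2_eq_square)

lemma qform_zero: "(\<And>i. i < n \<Longrightarrow> x i = 0) \<Longrightarrow> qform n H x = 0"
  unfolding qform_def vinner_def by simp

lemma continuous_on_component [continuous_intros]:
  "continuous_on S (\<lambda>x::nat \<Rightarrow> complex. x i)"
  by (rule continuous_on_subset[OF continuous_on_product_coordinates]) simp

text \<open>Vectors are functions on all of \<open>nat\<close>, so the unit sphere is not compact; its
  truncation to the first \<open>n\<close> coordinates is, and no quantity here sees the other ones.\<close>

definition trunc_vec :: "nat \<Rightarrow> (nat \<Rightarrow> complex) \<Rightarrow> nat \<Rightarrow> complex" where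
  "trunc_vec n x = (\<lambda>i. if i < n then x i else 0)"

lemma compact_trunc_ball:
  "compact (PiE UNIV (\<lambda>i. if i < n then cball (0::complex) 1 else {0}))"
proof -
  have "compactin (product_topology (\<lambda>i. euclidean) UNIV)
      (PiE UNIV (\<lambda>i. if i < n then cball (0::complex) 1 else {0}))"
    unfolding compactin_PiE by auto
  thus ?thesis unfolding euclidean_product_topology by simp
qed

lemma qform_attains_min_on_orth_sphere:
  assumes x0: "vnorm2 n x0 = 1" "vinner n e x0 = 0"
  obtains x where "vnorm2 n x = 1" "vinner n e x = 0"
    "\<And>y. vnorm2 n y = 1 \<Longrightarrow> vinner n e y = 0 \<Longrightarrow> qform n H x \<le> qform n H y"
proof -
  define S where "S = PiE UNIV (\<lambda>i. if i < n then cball (0::complex) 1 else {0})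
    \<inter> {x. vnorm2 n x = 1} \<inter> {x. vinner n e x = 0}"
  have trunc_in_S: "trunc_vec n y \<in> S" if "vnorm2 n y = 1" "vinner n e y = 0" for y
  proof -
    have "vnorm2 n (trunc_vec n y) = vnorm2 n y" "vinner n e (trunc_vec n y) = vinner n e y"
      unfolding vnorm2_def vinner_def trunc_vec_def by simp_all
    thus ?thesis unfolding S_def trunc_vec_def
      using that vnorm2_component_le[of _ n y] by (auto simp: PiE_iff)
  qed
  have "compact S" unfolding S_def vnorm2_def vinner_def
    by (intro compact_Int_closed compact_trunc_ball closed_Collect_eq continuous_intros)
  moreover have "S \<noteq> {}" using trunc_in_S[OF x0] by blast
  moreover have "continuous_on S (qform n H)"
    unfolding qform_def vinner_def matvec_def by (intro continuous_intros)
  ultimately obtain x where x: "x \<in> S" and min: "\<And>y. y \<in> S \<Longrightarrow> qform n H x \<le> qform n H y"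
    using continuous_attains_inf by metis
  show thesis
  proof (rule that)
    show "vnorm2 n x = 1" "vinner n e x = 0" using x by (simp_all add: S_def)
    fix y assume "vnorm2 n y = 1" "vinner n e y = 0"
    hence "qform n H x \<le> qform n H (trunc_vec n y)" by (intro min trunc_in_S)
    also have "\<dots> = qform n H y"
      unfolding qform_def vinner_def matvec_def trunc_vec_def by simp
    finally show "qform n H x \<le> qform n H y" .
  qed
qed

lemma qform_min_on_orth:
  assumes "vnorm2 n x0 = 1" "vinner n e x0 = 0"
  obtains x where "vnorm2 n x = 1" "vinner n e x = 0"
    "\<And>z. vinner n e z = 0 \<Longrightarrow> qform n H x * vnorm2 n z \<le> qform n H z"
proof -
  obtain x where x1: "vnorm2 n x = 1" and xe: "vinner n e x = 0"
     and min: "\<And>y. vnorm2 n y = 1 \<Longrightarrow> vinner n e y = 0 \<Longrightarrow> qform n H x \<le> qform n H y"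
    using qform_attains_min_on_orth_sphere[OF assms] by blast
  have "qform n H x * vnorm2 n z \<le> qform n H z" if ze: "vinner n e z = 0" for z
  proof (cases "vnorm2 n z = 0")
    case True
    thus ?thesis using vnorm2_eq_0D qform_zero by simp
  next
    case False
    define r where "r = sqrt (vnorm2 n z)"
    have r: "0 < r" "r\<^sup>2 = vnorm2 n z"
      unfolding r_def using False vnorm2_nonneg[of n z] by auto
    define w where "w = (\<lambda>i. complex_of_real (1 / r) * z i)"
    have "vnorm2 n w = 1"
      unfolding w_def vnorm2_scale r(2)[symmetric] using r False
      by (simp add: norm_divide power_divide)
    moreover have "vinner n e w = 0" unfolding w_def vinner_scale_right ze by simp
    ultimately have "qform n H x \<le> qform n H z / r\<^sup>2"
      using min[of w] unfolding w_def qform_scale by (simp add: power_divide)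
    thus ?thesis using r False vnorm2_nonneg[of n z] by (simp add: le_divide_eq)
  qed
  with x1 xe show thesis by (rule that)
qed

lemma qform_add_scaled:
  assumes "hermitian n H"
  shows "qform n H (\<lambda>i. x i + complex_of_real t * y i)
     = qform n H x + 2 * t * Re (vinner n y (matvec n H x)) + t\<^sup>2 * qform n H y"
proof -
  have c: "vinner n x (matvec n H y) = cnj (vinner n y (matvec n H x))"
    using vinner_matvec_hermitian[OF assms] cnj_vinner by metis
  have "vinner n (\<lambda>i. x i + complex_of_real t * y i) (matvec n H (\<lambda>i. x i + complex_of_real t * y i))
     = vinner n x (matvec n H x) + of_real t * vinner n x (matvec n H y)
       + of_real t * vinner n y (matvec n H x) + of_real t * of_real t * vinner n y (matvec n H y)"
    unfolding matvec_add matvec_scale vinner_add_left vinner_add_right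
      vinner_scale_left vinner_scale_right
    by (simp add: algebra_simps)
  thus ?thesis unfolding qform_def c by (simp add: power2_eq_square)
qed

lemma quadratic_nonneg_imp_linear_coeff_zero:
  fixes a b :: real
  assumes "0 \<le> b" and "\<And>t. 0 \<le> 2 * t * a + t\<^sup>2 * b"
  shows "a = 0"
proof (rule ccontr)
  assume "a \<noteq> 0"
  define t where "t = - a / (b + 1)"
  have bt: "(b + 1) * t = - a" unfolding t_def using assms(1) by simp
  have "0 \<le> (b + 1)\<^sup>2 * (2 * t * a + t\<^sup>2 * b)" using assms(2)[of t] by simp
  also have "\<dots> = 2 * a * (b + 1) * ((b + 1) * t) + ((b + 1) * t)\<^sup>2 * b"
    by (simp add: algebra_simps power2_eq_square)
  also have "\<dots> = - (a\<^sup>2 * (b + 2))" unfolding bt by (simp add: algebra_simps power2_eq_square)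
  also have "\<dots> < 0" using \<open>a \<noteq> 0\<close> assms(1) by (simp add: add_pos_nonneg)
  finally show False by simp
qed

lemma qform_nonneg_zero_imp_orth:
  assumes herm: "hermitian n G" and nonneg: "\<And>z. vinner n e z = 0 \<Longrightarrow> 0 \<le> qform n G z"
    and x: "vinner n e x = 0" "qform n G x = 0" and y: "vinner n e y = 0"
  shows "vinner n y (matvec n G x) = 0"
proof -
  have re: "Re (vinner n z (matvec n G x)) = 0" if z: "vinner n e z = 0" for z
  proof (rule quadratic_nonneg_imp_linear_coeff_zero)
    show "0 \<le> qform n G z" by (rule nonneg[OF z])
    fix t
    have "vinner n e (\<lambda>i. x i + complex_of_real t * z i) = 0"
      unfolding vinner_add_right vinner_scale_right x z by simp
    hence "0 \<le> qform n G (\<lambda>i. x i + complex_of_real t * z i)" by (rule nonneg)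
    thus "0 \<le> 2 * t * Re (vinner n z (matvec n G x)) + t\<^sup>2 * qform n G z"
      unfolding qform_add_scaled[OF herm] x by simp
  qed
  have "Re (vinner n y (matvec n G x)) = 0" by (rule re[OF y])
  moreover have "Re (vinner n (\<lambda>i. \<i> * y i) (matvec n G x)) = 0"
    by (rule re) (simp add: vinner_scale_right y)
  ultimately show ?thesis unfolding vinner_scale_left by (simp add: complex_eq_iff)
qed

definition diag_shift :: "(nat \<Rightarrow> nat \<Rightarrow> complex) \<Rightarrow> real \<Rightarrow> nat \<Rightarrow> nat \<Rightarrow> complex" where
  "diag_shift H m = (\<lambda>i j. H i j - (if i = j then complex_of_real m else 0))"

lemma matvec_diag_shift:
  assumes "i < n"
  shows "matvec n (diag_shift H m) z i = matvec n H z i - of_real m * z i"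
proof -
  have "(\<Sum>j<n. (if i = j then complex_of_real m else 0) * z j)
      = (\<Sum>j<n. if i = j then complex_of_real m * z j else 0)"
    by (rule sum.cong) auto
  also have "\<dots> = of_real m * z i" using assms by simp
  finally have "(\<Sum>j<n. (if i = j then complex_of_real m else 0) * z j) = of_real m * z i" .
  thus ?thesis unfolding matvec_def diag_shift_def left_diff_distrib sum_subtractf by simp
qed

lemma hermitian_diag_shift:
  assumes "hermitian n H"
  shows "hermitian n (diag_shift H m)"
  unfolding hermitian_def diag_shift_def
proof (intro allI impI)
  fix i j assume "i < n" "j < n"
  hence "H i j = cnj (H j i)" using assms unfolding hermitian_def by blast
  thus "H i j - (if i = j then complex_of_real m else 0)
      = cnj (H j i - (if j = i then complex_of_real m else 0))" by simp
qed

lemma qform_diag_shift: "qform n (diag_shift H m) z = qform n H z - m * vnorm2 n z"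
proof -
  have "vinner n z (matvec n (diag_shift H m) z) = vinner n z (\<lambda>i. matvec n H z i - of_real m * z i)"
    by (rule vinner_cong_right) (simp add: matvec_diag_shift)
  thus ?thesis unfolding qform_def vinner_diff_right vinner_scale_right vinner_self by simp
qed

lemma constrained_minimiser_eigvec:
  assumes herm: "hermitian n H" and e: "\<And>i. i < n \<Longrightarrow> matvec n H e i = of_real \<mu> * e i"
    and x: "vnorm2 n x = 1" "vinner n e x = 0"
    and min: "\<And>z. vinner n e z = 0 \<Longrightarrow> qform n H x * vnorm2 n z \<le> qform n H z"
  shows "eigvec n H (qform n H x) x"
proof -
  define m where "m = qform n H x"
  define G where "G = diag_shift H m"
  have hG: "hermitian n G" unfolding G_def by (rule hermitian_diag_shift[OF herm])
  have orth: "vinner n y (matvec n G x) = 0" if "vinner n e y = 0" for y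
    using qform_nonneg_zero_imp_orth[OF hG _ x(2) _ that] min
    unfolding G_def qform_diag_shift m_def x(1) by simp
  have "vinner n e (matvec n G x) = vinner n (matvec n G e) x"
    by (rule vinner_matvec_hermitian[OF hG])
  also have "\<dots> = vinner n (\<lambda>i. complex_of_real (\<mu> - m) * e i) x"
    unfolding G_def by (rule vinner_cong_left) (simp add: matvec_diag_shift e left_diff_distrib)
  also have "\<dots> = 0" unfolding vinner_scale_left x(2) by simp
  finally have "vnorm2 n (matvec n G x) = 0"
    using orth[of "matvec n G x"] unfolding vinner_self by simp
  hence "\<forall>i<n. matvec n G x i = 0" using vnorm2_eq_0D by blast
  hence "\<forall>i<n. matvec n H x i = complex_of_real m * x i"
    unfolding G_def by (simp add: matvec_diag_shift)
  moreover have "\<exists>i<n. x i \<noteq> 0"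
  proof (rule ccontr)
    assume "\<not> (\<exists>i<n. x i \<noteq> 0)"
    hence "vnorm2 n x = 0" unfolding vnorm2_def by simp
    with x(1) show False by simp
  qed
  ultimately show ?thesis unfolding eigvec_def m_def by blast
qed

lemma finite_eigenvalues: "finite (eigenvalues n H)"
proof -
  define A where "A = Matrix.mat n n (\<lambda>(i, j). H i j)"
  have A: "A \<in> carrier_mat n n" unfolding A_def by simp
  have "complex_of_real ` eigenvalues n H \<subseteq> {z. poly (char_poly A) z = 0}"
  proof
    fix z assume "z \<in> complex_of_real ` eigenvalues n H"
    then obtain l x where z: "z = complex_of_real l" and ev: "eigvec n H l x"
      unfolding eigenvalues_def by blast
    have "eigenvector A (Matrix.vec n x) z" unfolding eigenvector_def
    proof (intro conjI)
      show "Matrix.vec n x \<in> carrier_vec (dim_row A)" unfolding A_def by simp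
      show "Matrix.vec n x \<noteq> 0\<^sub>v (dim_row A)"
        using ev unfolding eigvec_def A_def by (metis dim_row_mat(1) index_vec index_zero_vec(1))
      show "A *\<^sub>v Matrix.vec n x = z \<cdot>\<^sub>v Matrix.vec n x"
      proof (rule eq_vecI)
        fix i assume "i < dim_vec (z \<cdot>\<^sub>v Matrix.vec n x)"
        hence i: "i < n" by simp
        have "(A *\<^sub>v Matrix.vec n x) $ i = matvec n H x i"
          unfolding A_def matvec_def using i by (simp add: scalar_prod_def atLeast0LessThan)
        also have "\<dots> = z * x i" using ev i z unfolding eigvec_def by simp
        finally show "(A *\<^sub>v Matrix.vec n x) $ i = (z \<cdot>\<^sub>v Matrix.vec n x) $ i" using i by simp
      qed (simp add: A_def)
    qed
    thus "z \<in> {z. poly (char_poly A) z = 0}"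
      using eigenvalue_root_char_poly[OF A] unfolding eigenvalue_def by blast
  qed
  moreover have "char_poly A \<noteq> 0" using degree_monic_char_poly[OF A] by auto
  ultimately have "finite (complex_of_real ` eigenvalues n H)"
    using finite_subset poly_roots_finite by blast
  thus ?thesis by (rule finite_imageD) (simp add: inj_on_def)
qed

lemma vinner_matvec_eigvec: "eigvec n H l x \<Longrightarrow> vinner n y (matvec n H x) = of_real l * vinner n y x"
  unfolding eigvec_def by (simp add: vinner_cong_right[of n "matvec n H x"] vinner_scale_right)

lemma qform_eigvec: "eigvec n H l x \<Longrightarrow> qform n H x = l * vnorm2 n x"
  unfolding qform_def by (simp add: vinner_matvec_eigvec vinner_self)

lemma vnorm2_eigvec_pos: "eigvec n H l x \<Longrightarrow> 0 < vnorm2 n x"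
  unfolding eigvec_def by (rule vnorm2_pos) blast

lemma eigvec_orthogonal:
  assumes "hermitian n H" "eigvec n H l1 x" "eigvec n H l2 y" "l1 \<noteq> l2"
  shows "vinner n x y = 0"
proof -
  have "of_real l2 * vinner n x y = vinner n x (matvec n H y)"
    by (rule vinner_matvec_eigvec[OF assms(3), symmetric])
  also have "\<dots> = cnj (vinner n y (matvec n H x))"
    by (metis vinner_matvec_hermitian[OF assms(1)] cnj_vinner)
  also have "\<dots> = of_real l1 * vinner n x y"
    by (simp add: vinner_matvec_eigvec[OF assms(2)] cnj_vinner)
  finally show ?thesis using assms(4) by simp
qed

lemma vnorm2_unit_vector: "k < n \<Longrightarrow> vnorm2 n (\<lambda>i. if i = k then 1 else 0) = 1"
proof -
  assume "k < n"
  have "vnorm2 n (\<lambda>i. if i = k then 1 else 0) = (\<Sum>i<n. if i = k then 1 else 0)"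
    unfolding vnorm2_def by (rule sum.cong) auto
  thus ?thesis using \<open>k < n\<close> by simp
qed

lemma exists_orth_unit_vector:
  assumes "2 \<le> n"
  obtains x where "vnorm2 n x = 1" "vinner n e x = 0"
proof -
  define v where "v = (\<lambda>i::nat. if i = 0 then cnj (e 1) else if i = 1 then - cnj (e 0) else 0)"
  define w where "w = (\<lambda>i::nat. if i = 0 then 1 else 0 :: complex)"
  have "vinner n e v = (\<Sum>i<2. cnj (e i) * v i)"
    unfolding vinner_def by (rule sum.mono_neutral_right) (use assms in \<open>auto simp: v_def\<close>)
  hence ev: "vinner n e v = 0" by (simp add: v_def numeral_2_eq_2)
  have ew: "vinner n e w = cnj (e 0)"
    using assms unfolding vinner_def w_def by (simp add: if_distrib cong: if_cong)
  have w1: "vnorm2 n w = 1" unfolding w_def using assms by (intro vnorm2_unit_vector) simp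
  obtain y where y: "0 < vnorm2 n y" "vinner n e y = 0"
  proof (cases "e 0 = 0 \<and> e 1 = 0")
    case True
    thus thesis using that[of w] ew w1 by simp
  next
    case False
    hence "v 0 \<noteq> 0 \<or> v 1 \<noteq> 0" unfolding v_def by auto
    moreover have "0 < n" "1 < n" using assms by auto
    ultimately have "0 < vnorm2 n v" by (intro vnorm2_pos) blast
    with that show thesis using ev by blast
  qed
  define x where "x = (\<lambda>i. complex_of_real (1 / sqrt (vnorm2 n y)) * y i)"
  have "vnorm2 n x = 1" unfolding x_def vnorm2_scale using y(1) by (simp add: norm_divide power_divide)
  moreover have "vinner n e x = 0" unfolding x_def vinner_scale_right y(2) by simp
  ultimately show thesis by (rule that)
qed

lemma lam1_eigvec_and_lower_bound:
  assumes herm: "hermitian n H" and n: "0 < n"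
  shows "\<exists>x. eigvec n H (lam1 n H) x" and "lam1 n H * vnorm2 n z \<le> qform n H z"
proof -
  have unit: "vnorm2 n (\<lambda>i. if i = 0 then 1 else 0) = 1" by (rule vnorm2_unit_vector[OF n])
  obtain x where x: "vnorm2 n x = 1" "vinner n (\<lambda>i. 0) x = 0"
    and min: "\<And>z. qform n H x * vnorm2 n z \<le> qform n H z"
    using qform_min_on_orth[OF unit, of "\<lambda>i. 0" H] by (auto simp: vinner_def)
  have ev: "eigvec n H (qform n H x) x"
    by (rule constrained_minimiser_eigvec[OF herm _ x, of 0]) (auto simp: matvec_def min)
  have "lam1 n H = qform n H x" unfolding lam1_def
  proof (rule Min_eqI[OF finite_eigenvalues])
    fix l assume "l \<in> eigenvalues n H"
    then obtain y where y: "eigvec n H l y" unfolding eigenvalues_def by blast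
    show "qform n H x \<le> l" using min[of y] vnorm2_eigvec_pos[OF y] by (simp add: qform_eigvec[OF y])
  qed (use ev eigenvalues_def in blast)
  thus "\<exists>x. eigvec n H (lam1 n H) x" "lam1 n H * vnorm2 n z \<le> qform n H z"
    using ev min by auto
qed

lemma lam2_variational:
  assumes herm: "hermitian n H" and n: "2 \<le> n" and simple: "lam1_simple n H"
  obtains e1 e2 where "eigvec n H (lam1 n H) e1" "eigvec n H (lam2 n H) e2" "lam1 n H < lam2 n H"
    "\<And>z. vinner n e1 z = 0 \<Longrightarrow> lam2 n H * vnorm2 n z \<le> qform n H z"
proof -
  have n0: "0 < n" using n by simp
  obtain e1 where e1: "eigvec n H (lam1 n H) e1"
    using lam1_eigvec_and_lower_bound(1)[OF herm n0] by blast
  obtain x0 where "vnorm2 n x0 = 1" "vinner n e1 x0 = 0" using exists_orth_unit_vector[OF n] .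
  then obtain x where x: "vnorm2 n x = 1" "vinner n e1 x = 0"
    and min: "\<And>z. vinner n e1 z = 0 \<Longrightarrow> qform n H x * vnorm2 n z \<le> qform n H z"
    using qform_min_on_orth by blast
  define m where "m = qform n H x"
  define L where "L = {l \<in> eigenvalues n H. lam1 n H < l}"
  have ev: "eigvec n H m x" unfolding m_def
    by (rule constrained_minimiser_eigvec[OF herm _ x min]) (use e1 eigvec_def in blast)
  have "lam1 n H \<le> m"
    using lam1_eigvec_and_lower_bound(2)[OF herm n0, of x] qform_eigvec[OF ev] x(1) by simp
  moreover have "m \<noteq> lam1 n H"
  proof
    assume "m = lam1 n H"
    then obtain c where c: "\<forall>i<n. x i = c * e1 i"
      using simple ev e1 unfolding lam1_simple_def by blast
    have "vinner n e1 x = vinner n e1 (\<lambda>i. c * e1 i)" by (rule vinner_cong_right) (use c in auto)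
    hence "c = 0" using x(2) vnorm2_eigvec_pos[OF e1] by (simp add: vinner_scale_right vinner_self)
    hence "vnorm2 n x = 0" using c unfolding vnorm2_def by simp
    with x(1) show False by simp
  qed
  ultimately have mL: "m \<in> L" using ev unfolding L_def eigenvalues_def by auto
  have finL: "finite L" unfolding L_def using finite_eigenvalues by simp
  have "lam2 n H \<le> m" unfolding lam2_def L_def[symmetric] by (rule Min_le[OF finL mL])
  moreover have "lam2 n H \<in> L"
    unfolding lam2_def L_def[symmetric] using mL by (intro Min_in[OF finL]) blast
  moreover have "lam2 n H * vnorm2 n z \<le> qform n H z" if "vinner n e1 z = 0" for z
    using min[OF that] mult_right_mono[OF \<open>lam2 n H \<le> m\<close> vnorm2_nonneg[of n z]] unfolding m_def
    by linarith
  ultimately show thesis using that e1 unfolding L_def eigenvalues_def by blast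
qed

lemma qform_vnorm2_two_eigvecs:
  fixes a b :: complex
  assumes herm: "hermitian n H" and e1: "eigvec n H l1 e1" and e2: "eigvec n H l2 e2"
    and "l1 \<noteq> l2"
  defines "x \<equiv> \<lambda>i. a * e1 i + b * e2 i"
  shows "vnorm2 n x = (cmod a)\<^sup>2 * vnorm2 n e1 + (cmod b)\<^sup>2 * vnorm2 n e2"
    and "qform n H x = (cmod a)\<^sup>2 * l1 * vnorm2 n e1 + (cmod b)\<^sup>2 * l2 * vnorm2 n e2"
proof -
  have o12: "vinner n e1 e2 = 0" by (rule eigvec_orthogonal[OF herm e1 e2 \<open>l1 \<noteq> l2\<close>])
  hence o21: "vinner n e2 e1 = 0" by (metis cnj_vinner complex_cnj_zero)
  have sq: "cnj c * c = of_real ((cmod c)\<^sup>2)" for c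
    by (metis complex_norm_square mult.commute)
  have pair: "vinner n x (\<lambda>i. c1 * e1 i + c2 * e2 i)
      = cnj a * c1 * of_real (vnorm2 n e1) + cnj b * c2 * of_real (vnorm2 n e2)" for c1 c2
    unfolding x_def vinner_add_left vinner_add_right vinner_scale_left vinner_scale_right
      o12 o21 vinner_self by simp
  have "of_real (vnorm2 n x) = vinner n x x" by (rule vinner_self[symmetric])
  also have "\<dots> = of_real ((cmod a)\<^sup>2 * vnorm2 n e1 + (cmod b)\<^sup>2 * vnorm2 n e2)"
    using pair[of a b] unfolding x_def[symmetric] sq by simp
  finally show "vnorm2 n x = (cmod a)\<^sup>2 * vnorm2 n e1 + (cmod b)\<^sup>2 * vnorm2 n e2"
    by (simp only: of_real_eq_iff)
  have "vinner n x (matvec n H x)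
      = vinner n x (\<lambda>i. (a * of_real l1) * e1 i + (b * of_real l2) * e2 i)"
    using e1 e2 unfolding eigvec_def x_def matvec_add matvec_scale
    by (intro vinner_cong_right) (simp add: algebra_simps)
  also have "\<dots> = of_real ((cmod a)\<^sup>2 * l1 * vnorm2 n e1 + (cmod b)\<^sup>2 * l2 * vnorm2 n e2)"
    unfolding pair mult.assoc[symmetric] sq by simp
  finally show "qform n H x = (cmod a)\<^sup>2 * l1 * vnorm2 n e1 + (cmod b)\<^sup>2 * l2 * vnorm2 n e2"
    unfolding qform_def by simp
qed

text \<open>Together with lam2_variational this is the Courant--Fischer min-max characterisation
  of \<open>\<lambda>\<^sub>2\<close>: every hyperplane meets the span of the first two eigenvectors.\<close>

lemma exists_orth_qform_le_lam2:
  assumes herm: "hermitian n H" and n: "2 \<le> n" and simple: "lam1_simple n H"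
  obtains x where "0 < vnorm2 n x" "vinner n y x = 0" "qform n H x \<le> lam2 n H * vnorm2 n x"
proof -
  obtain e1 e2 where e1: "eigvec n H (lam1 n H) e1" and e2: "eigvec n H (lam2 n H) e2"
    and lt: "lam1 n H < lam2 n H"
    and "\<And>z. vinner n e1 z = 0 \<Longrightarrow> lam2 n H * vnorm2 n z \<le> qform n H z"
    by (rule lam2_variational[OF assms]) blast
  have n1: "0 < vnorm2 n e1" "0 < vnorm2 n e2" using vnorm2_eigvec_pos e1 e2 by auto
  define a where "a = vinner n y e2"
  define b where "b = - vinner n y e1"
  show thesis
  proof (cases "a = 0 \<and> b = 0")
    case True
    have "qform n H e1 \<le> lam2 n H * vnorm2 n e1"
      using lt n1 by (simp add: qform_eigvec[OF e1])
    thus thesis using that n1 True b_def by simp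
  next
    case False
    note x = qform_vnorm2_two_eigvecs[OF herm e1 e2, of a b]
    show thesis
    proof (rule that)
      show "0 < vnorm2 n (\<lambda>i. a * e1 i + b * e2 i)"
        using False n1 lt unfolding x(1)[OF less_imp_neq[OF lt]]
        by (auto intro: add_pos_nonneg add_nonneg_pos)
      show "vinner n y (\<lambda>i. a * e1 i + b * e2 i) = 0"
        unfolding vinner_add_right vinner_scale_right a_def b_def by simp
      have "(cmod a)\<^sup>2 * lam1 n H * vnorm2 n e1 \<le> (cmod a)\<^sup>2 * lam2 n H * vnorm2 n e1"
        using lt n1 by (intro mult_right_mono mult_left_mono) auto
      thus "qform n H (\<lambda>i. a * e1 i + b * e2 i) \<le> lam2 n H * vnorm2 n (\<lambda>i. a * e1 i + b * e2 i)"
        unfolding x[OF less_imp_neq[OF lt]] by (simp add: algebra_simps)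
    qed
  qed
qed

subsection \<open>Lipschitz continuity of the spectral gap\<close>

lemma qform_add_le:
  assumes "\<forall>i<n. \<forall>j<n. G i j = H i j + E i j"
  shows "qform n G x \<le> qform n H x + opnorm n E * vnorm2 n x"
proof -
  have "matvec n G x i = matvec n H x i + matvec n E x i" if "i < n" for i
    unfolding matvec_def sum.distrib[symmetric] distrib_right[symmetric]
    using assms that by (intro sum.cong) auto
  hence "qform n G x = qform n H x + Re (vinner n x (matvec n E x))"
    unfolding qform_def by (simp add: vinner_cong_right[of n "matvec n G x"] vinner_add_right)
  also have "Re (vinner n x (matvec n E x)) \<le> opnorm n E * vnorm2 n x"
    using complex_Re_le_cmod norm_vinner_matvec_le order_trans by blast
  finally show ?thesis by simp
qed

lemma lam1_add_le:
  assumes hH: "hermitian n H" and hG: "hermitian n G" and n: "0 < n"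
    and GHE: "\<forall>i<n. \<forall>j<n. G i j = H i j + E i j"
  shows "lam1 n G \<le> lam1 n H + opnorm n E"
proof -
  obtain x where x: "eigvec n H (lam1 n H) x" using lam1_eigvec_and_lower_bound(1)[OF hH n] ..
  have "lam1 n G * vnorm2 n x \<le> qform n G x" by (rule lam1_eigvec_and_lower_bound(2)[OF hG n])
  also have "\<dots> \<le> (lam1 n H + opnorm n E) * vnorm2 n x"
    using qform_add_le[OF GHE, of x] qform_eigvec[OF x] by (simp add: algebra_simps)
  finally show ?thesis using vnorm2_eigvec_pos[OF x] by simp
qed

lemma lam2_add_le:
  assumes hH: "hermitian n H" and hG: "hermitian n G" and n: "2 \<le> n"
    and sH: "lam1_simple n H" and sG: "lam1_simple n G"
    and GHE: "\<forall>i<n. \<forall>j<n. G i j = H i j + E i j"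
  shows "lam2 n G \<le> lam2 n H + opnorm n E"
proof -
  obtain e1 where e1: "\<And>z. vinner n e1 z = 0 \<Longrightarrow> lam2 n G * vnorm2 n z \<le> qform n G z"
    using lam2_variational[OF hG n sG] by metis
  obtain y where y: "0 < vnorm2 n y" "vinner n e1 y = 0" "qform n H y \<le> lam2 n H * vnorm2 n y"
    using exists_orth_qform_le_lam2[OF hH n sH] by metis
  have "lam2 n G * vnorm2 n y \<le> qform n G y" by (rule e1[OF y(2)])
  also have "\<dots> \<le> (lam2 n H + opnorm n E) * vnorm2 n y"
    using qform_add_le[OF GHE, of y] y(3) by (simp add: algebra_simps)
  finally show ?thesis using y(1) by simp
qed

lemma hermitian_Hint:
  assumes "hermitian n H0" "hermitian n H1"
  shows "hermitian n (Hint H0 H1 v)"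
  unfolding hermitian_def
proof (intro allI impI)
  fix i j assume "i < n" "j < n"
  hence "H0 i j = cnj (H0 j i)" "H1 i j = cnj (H1 j i)" using assms unfolding hermitian_def by blast+
  thus "Hint H0 H1 v i j = cnj (Hint H0 H1 v j i)" unfolding Hint_def by simp
qed

lemma gap_lipschitz:
  assumes hH0: "hermitian n H0" and hH1: "hermitian n H1" and n: "2 \<le> n"
    and sv: "lam1_simple n (Hint H0 H1 v)" and sw: "lam1_simple n (Hint H0 H1 w)"
  shows "\<bar>gap n H0 H1 w - gap n H0 H1 v\<bar> \<le> 2 * opnorm n (matdiff H1 H0) * \<bar>w - v\<bar>"
proof -
  have perturb: "lam1 n (Hint H0 H1 b) \<le> lam1 n (Hint H0 H1 a) + \<bar>b - a\<bar> * opnorm n (matdiff H1 H0)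
      \<and> lam2 n (Hint H0 H1 b) \<le> lam2 n (Hint H0 H1 a) + \<bar>b - a\<bar> * opnorm n (matdiff H1 H0)"
    if "lam1_simple n (Hint H0 H1 a)" "lam1_simple n (Hint H0 H1 b)" for a b
  proof -
    have sum: "\<forall>i<n. \<forall>j<n. Hint H0 H1 b i j
        = Hint H0 H1 a i j + complex_of_real (b - a) * matdiff H1 H0 i j"
      unfolding Hint_def matdiff_def by (simp add: algebra_simps)
    have "opnorm n (\<lambda>i j. complex_of_real (b - a) * matdiff H1 H0 i j)
        \<le> \<bar>b - a\<bar> * opnorm n (matdiff H1 H0)"
      using opnorm_scale_le[of n "complex_of_real (b - a)"] by (simp only: norm_of_real)
    thus ?thesis
      using lam1_add_le[OF hermitian_Hint[OF hH0 hH1] hermitian_Hint[OF hH0 hH1] _ sum]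
        lam2_add_le[OF hermitian_Hint[OF hH0 hH1] hermitian_Hint[OF hH0 hH1] n that sum] n
      by fastforce
  qed
  have "2 * opnorm n (matdiff H1 H0) * \<bar>w - v\<bar> = 2 * (\<bar>w - v\<bar> * opnorm n (matdiff H1 H0))"
    by simp
  thus ?thesis
    using perturb[OF sv sw] perturb[OF sw sv]
    unfolding gap_def abs_le_iff abs_minus_commute[of v w] by linarith
qed

lemma DERIV_abs_le_Lipschitz:
  fixes f :: "real \<Rightarrow> real"
  assumes lip: "\<And>w. w \<in> S \<Longrightarrow> \<bar>f w - f v\<bar> \<le> L * \<bar>w - v\<bar>"
    and f': "(f has_real_derivative D) (at v within S)" and nontriv: "at v within S \<noteq> bot"
  shows "\<bar>D\<bar> \<le> L"
proof (rule tendsto_upperbound[OF _ _ nontriv])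
  show "((\<lambda>y. \<bar>(f y - f v) / (y - v)\<bar>) \<longlongrightarrow> \<bar>D\<bar>) (at v within S)"
    using f' unfolding has_field_derivative_iff by (rule tendsto_rabs)
  show "\<forall>\<^sub>F y in at v within S. \<bar>(f y - f v) / (y - v)\<bar> \<le> L"
    unfolding eventually_at_filter
    by (rule always_eventually) (auto simp: lip abs_divide divide_le_eq)
qed

lemma at_within_unit_interval_nontrivial: "v \<in> {0..1} \<Longrightarrow> at v within {0..1::real} \<noteq> bot"
  by (simp add: trivial_limit_within)

lemma measure_condition_nonneg:
  assumes "measure_condition D C"
  shows "0 \<le> C"
proof -
  have "0 \<le> measure lebesgue {v \<in> {0..1}. D v \<le> 1}" by (rule measure_nonneg)
  also have "\<dots> \<le> C * 1" 
    by (rule assms[unfolded measure_condition_def, rule_format]) simp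
  finally show ?thesis by simp
qed

lemma level_set_lmeasurable:
  fixes D :: "real \<Rightarrow> real"
  assumes "continuous_on {a..b} D"
  shows "{v \<in> {a..b}. D v \<le> t} \<in> lmeasurable"
proof (rule lmeasurable_compact)
  have "{v \<in> {a..b}. D v \<le> t} = {a..b} \<inter> D -` {..t}" by auto
  hence "closed {v \<in> {a..b}. D v \<le> t}"
    using continuous_closed_preimage[OF assms] by simp
  hence "compact ({a..b} \<inter> {v \<in> {a..b}. D v \<le> t})" by (rule compact_Int_closed[OF compact_Icc])
  moreover have "{a..b} \<inter> {v \<in> {a..b}. D v \<le> t} = {v \<in> {a..b}. D v \<le> t}" by auto
  ultimately show "compact {v \<in> {a..b}. D v \<le> t}" by (simp only:)
qed

subsection \<open>Integrals of negative powers under the measure condition\<close>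

definition dyadic_const :: "real \<Rightarrow> real \<Rightarrow> real" where
  "dyadic_const q C = 2 powr q * C / (1 - 2 powr (1 - q))"

lemma dyadic_const_nonneg:
  assumes "1 < q" "0 \<le> C"
  shows "0 \<le> dyadic_const q C"
proof -
  have "(2::real) powr (1 - q) < 1" using assms(1) by (intro powr_less_one) auto
  thus ?thesis unfolding dyadic_const_def using assms(2)
    by (intro divide_nonneg_pos mult_nonneg_nonneg) auto
qed

text \<open>Pointwise layer-cake estimate: \<open>y\<^sup>-\<^sup>q\<close> is dominated by the weights of the dyadic levels
  \<open>2\<^sup>k m\<close> above \<open>y\<close>, the smallest such level being within a factor \<open>2\<close> of \<open>y\<close>.\<close>

lemma powr_neg_le_dyadic_sum:
  fixes q m y :: real
  assumes q: "0 < q" and m: "0 < m" and my: "m \<le> y"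
  shows "y \<le> 2 ^ N * m \<Longrightarrow>
    y powr (-q) \<le> (\<Sum>k\<le>N. 2 powr q * (2 ^ k * m) powr (-q) * of_bool (y \<le> 2 ^ k * m))"
proof (induction N)
  case 0
  hence "y = m" using my by simp
  moreover have "1 \<le> (2::real) powr q" using q by (intro ge_one_powr_ge_zero) auto
  ultimately show ?case using mult_right_mono[of 1 "2 powr q" "m powr (-q)"] by simp
next
  case (Suc N)
  let ?S = "\<Sum>k\<le>N. 2 powr q * (2 ^ k * m) powr (-q) * of_bool (y \<le> 2 ^ k * m)"
  let ?t = "2 powr q * (2 ^ Suc N * m) powr (-q) * of_bool (y \<le> 2 ^ Suc N * m)"
  have "0 \<le> ?S" "0 \<le> ?t" by (auto intro: sum_nonneg)
  moreover have "y powr (-q) \<le> ?S \<or> y powr (-q) \<le> ?t"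
  proof (cases "y \<le> 2 ^ N * m")
    case True
    thus ?thesis using Suc.IH by blast
  next
    case False
    have "?t = 2 powr q * (2 powr (-q) * (2 ^ N * m) powr (-q))"
      using Suc.prems m by (simp add: powr_mult mult.assoc)
    also have "\<dots> = (2 ^ N * m) powr (-q)" by (simp add: powr_minus)
    finally have "?t = (2 ^ N * m) powr (-q)" .
    moreover have "y powr (-q) \<le> (2 ^ N * m) powr (-q)"
      using False m q by (intro powr_mono2') auto
    ultimately show ?thesis by simp
  qed
  ultimately show ?case unfolding sum.atMost_Suc by linarith
qed

lemma integral_powr_neg_le_level_sets:
  fixes D :: "real \<Rightarrow> real"
  assumes q: "0 < q" and m: "0 < m" and cont: "continuous_on {0..1} D"
    and D_ge: "\<And>v. v \<in> {0..1} \<Longrightarrow> m \<le> D v" and D_le: "\<And>v. v \<in> {0..1} \<Longrightarrow> D v \<le> 2 ^ N * m"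
  shows "integral {0..1} (\<lambda>v. D v powr (-q))
    \<le> (\<Sum>k\<le>N. 2 powr q * (2 ^ k * m) powr (-q) * measure lebesgue {v \<in> {0..1}. D v \<le> 2 ^ k * m})"
proof -
  define T where "T k = {v \<in> {0..1}. D v \<le> 2 ^ k * m}" for k :: nat
  define w where "w k = 2 powr q * (2 ^ k * m) powr (-q)" for k :: nat
  have T_sub: "T k \<inter> {0..1} = T k" for k unfolding T_def by auto
  have T: "T k \<in> lmeasurable" for k unfolding T_def by (rule level_set_lmeasurable[OF cont])
  have "\<forall>v\<in>{0..1}. 0 < D v" using D_ge m by (meson less_le_trans)
  hence "continuous_on {0..1} (\<lambda>v. D v powr (-q))"
    by (intro continuous_intros cont) auto
  hence "integral {0..1} (\<lambda>v. D v powr (-q)) \<le> integral {0..1} (\<lambda>v. \<Sum>k\<le>N. w k * indicat_real (T k) v)"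
  proof (rule integral_le[OF integrable_continuous_interval])
    show "(\<lambda>v. \<Sum>k\<le>N. w k * indicat_real (T k) v) integrable_on {0..1}"
      using T by (intro integrable_sum integrable_on_mult_right) (simp_all add: integrable_on_indicator T_sub)
    fix v :: real assume v: "v \<in> {0..1}"
    have "D v powr (-q) \<le> (\<Sum>k\<le>N. w k * of_bool (D v \<le> 2 ^ k * m))"
      unfolding w_def using q m D_ge[OF v] D_le[OF v] by (rule powr_neg_le_dyadic_sum)
    also have "\<dots> = (\<Sum>k\<le>N. w k * indicat_real (T k) v)"
      unfolding T_def using v by (intro sum.cong) (auto simp: indicator_def)
    finally show "D v powr (-q) \<le> (\<Sum>k\<le>N. w k * indicat_real (T k) v)" .
  qed
  also have "\<dots> = (\<Sum>k\<le>N. w k * measure lebesgue (T k))"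
    using T by (subst integral_sum)
      (auto simp: integral_indicator integrable_on_indicator T_sub intro!: integrable_on_mult_right)
  finally show ?thesis unfolding w_def T_def .
qed

lemma integral_powr_neg_le:
  fixes D :: "real \<Rightarrow> real"
  assumes q: "1 < q" and m: "0 < m" and cont: "continuous_on {0..1} D"
    and D_ge: "\<And>v. v \<in> {0..1} \<Longrightarrow> m \<le> D v" and mc: "measure_condition D C"
  shows "integral {0..1} (\<lambda>v. D v powr (-q)) \<le> dyadic_const q C * m powr (1 - q)"
proof -
  obtain M where M: "\<And>v. v \<in> {0..1} \<Longrightarrow> D v \<le> M"
    using compact_attains_sup[OF compact_continuous_image[OF cont compact_Icc]] by fastforce
  obtain N where "M / m < 2 ^ N" using real_arch_pow[of 2 "M / m"] by auto
  hence D_le: "D v \<le> 2 ^ N * m" if "v \<in> {0..1}" for v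
    using M[OF that] m by (simp add: divide_less_eq mult.commute)
  have C: "0 \<le> C" by (rule measure_condition_nonneg[OF mc])
  define r :: real where "r = 2 powr (1 - q)"
  have r: "0 < r" "r < 1" unfolding r_def using q by (auto simp: powr_less_one)
  have weight: "2 powr q * (2 ^ k * m) powr (-q) * (C * (2 ^ k * m)) = 2 powr q * C * m powr (1 - q) * r ^ k"
    for k :: nat
  proof -
    have "(2 ^ k * m) powr (-q) * (2 ^ k * m) = (2 ^ k * m) powr (-q) * (2 ^ k * m) powr 1"
      using m by simp
    also have "\<dots> = (2 ^ k * m) powr (-q + 1)" by (rule powr_add[symmetric])
    also have "\<dots> = m powr (1 - q) * r ^ k"
      unfolding r_def using m by (simp add: powr_mult powr_realpow[symmetric] powr_powr mult.commute)
    finally show ?thesis by (simp add: mult_ac)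
  qed
  have "integral {0..1} (\<lambda>v. D v powr (-q))
      \<le> (\<Sum>k\<le>N. 2 powr q * (2 ^ k * m) powr (-q) * measure lebesgue {v \<in> {0..1}. D v \<le> 2 ^ k * m})"
    using q m cont D_ge D_le by (intro integral_powr_neg_le_level_sets) auto
  also have "\<dots> \<le> (\<Sum>k\<le>N. 2 powr q * C * m powr (1 - q) * r ^ k)"
    unfolding weight[symmetric]
  proof (rule sum_mono, rule mult_left_mono)
    fix k assume "k \<in> {..N}"
    show "measure lebesgue {v \<in> {0..1}. D v \<le> 2 ^ k * m} \<le> C * (2 ^ k * m)"
      by (rule mc[unfolded measure_condition_def, rule_format]) (use m in simp)
  qed simp
  also have "\<dots> = 2 powr q * C * m powr (1 - q) * (\<Sum>k\<le>N. r ^ k)"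
    by (simp add: sum_distrib_left)
  also have "\<dots> \<le> 2 powr q * C * m powr (1 - q) * (1 / (1 - r))"
    using geometric_sum_less[OF r, of "{..N}"] C by (intro mult_left_mono) auto
  also have "\<dots> = dyadic_const q C * m powr (1 - q)"
    unfolding dyadic_const_def r_def by simp
  finally show ?thesis .
qed

subsection \<open>Power-law schedules\<close>

text \<open>Here \<open>e\<close> stands for \<open>d\<^sup>p\<^sup>-\<^sup>3\<close>, so that \<open>u' = c e d\<^sup>3\<close> and \<open>u'' = c\<^sup>2 p e\<^sup>2 d\<^sup>5 \<Delta>'\<close>.\<close>

lemma power_law_integrand_arith:
  fixes a1 a2 c d e p A L D' :: real
  assumes d: "0 < d" and nonneg: "0 \<le> e" "0 \<le> c" "0 \<le> p" "0 \<le> A" and D': "\<bar>D'\<bar> \<le> L"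
    and a1: "0 \<le> a1" "a1 \<le> c * e * d ^ 3 * A"
    and a2: "a2 \<le> c\<^sup>2 * p * e\<^sup>2 * d ^ 5 * \<bar>D'\<bar> * A"
  shows "a2 / d\<^sup>2 + a1\<^sup>2 / d ^ 3 \<le> c * A * (p * L + A) * (c * e * d ^ 3 * e)"
proof -
  have "a2 / d\<^sup>2 \<le> c\<^sup>2 * p * e\<^sup>2 * d ^ 5 * \<bar>D'\<bar> * A / d\<^sup>2"
    using a2 d by (simp add: divide_right_mono)
  also have "\<dots> = (c\<^sup>2 * p * e\<^sup>2 * d ^ 3 * A) * \<bar>D'\<bar>"
    using d by (simp add: field_simps eval_nat_numeral)
  also have "\<dots> \<le> (c\<^sup>2 * p * e\<^sup>2 * d ^ 3 * A) * L"
    using D' d nonneg by (intro mult_left_mono) auto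
  finally have 1: "a2 / d\<^sup>2 \<le> c\<^sup>2 * p * e\<^sup>2 * d ^ 3 * A * L" .
  have "a1\<^sup>2 \<le> (c * e * d ^ 3 * A)\<^sup>2" by (rule power_mono[OF a1(2) a1(1)])
  hence "a1\<^sup>2 / d ^ 3 \<le> (c * e * d ^ 3 * A)\<^sup>2 / d ^ 3" using d by (simp add: divide_right_mono)
  also have "\<dots> = c\<^sup>2 * e\<^sup>2 * d ^ 3 * A\<^sup>2" using d by (simp add: field_simps eval_nat_numeral)
  finally have 2: "a1\<^sup>2 / d ^ 3 \<le> c\<^sup>2 * e\<^sup>2 * d ^ 3 * A\<^sup>2" .
  have "c * A * (p * L + A) * (c * e * d ^ 3 * e)
      = c\<^sup>2 * p * e\<^sup>2 * d ^ 3 * A * L + c\<^sup>2 * e\<^sup>2 * d ^ 3 * A\<^sup>2"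
    by (simp add: algebra_simps power2_eq_square)
  with 1 2 show ?thesis by linarith
qed

text \<open>\<open>D\<close> plays the gap \<open>\<Delta>\<close>, \<open>m\<close> a positive lower bound for it such as \<open>\<Delta>\<^sub>*\<close>,
  and \<open>L\<close> a bound for \<open>\<bar>\<Delta>'\<bar>\<close>.\<close>

locale power_law_schedule =
  fixes p C L m :: real and D D' u u1 u2 :: "real \<Rightarrow> real"
  assumes p_gt_1: "1 < p" and p_lt_2: "p < 2"
    and m_pos: "0 < m" and D_ge: "\<And>v. v \<in> {0..1} \<Longrightarrow> m \<le> D v"
    and D_deriv: "\<And>v. v \<in> {0..1} \<Longrightarrow> (D has_real_derivative D' v) (at v within {0..1})"
    and D'_bound: "\<And>v. v \<in> {0..1} \<Longrightarrow> \<bar>D' v\<bar> \<le> L"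
    and measure_cond: "measure_condition D C"
    and u_0: "u 0 = 0" and u_1: "u 1 = 1" and u_range: "u ` {0..1} \<subseteq> {0..1}"
    and u_deriv: "\<And>s. s \<in> {0..1} \<Longrightarrow> (u has_real_derivative u1 s) (at s within {0..1})"
    and u1_deriv: "\<And>s. s \<in> {0..1} \<Longrightarrow> (u1 has_real_derivative u2 s) (at s within {0..1})"
    and u1_eq: "\<And>s. s \<in> {0..1} \<Longrightarrow> u1 s = integral {0..1} (\<lambda>v. D v powr (-p)) * D (u s) powr p"
begin

definition c_p :: real where
  "c_p = integral {0..1} (\<lambda>v. D v powr (-p))"

lemma u_in: "s \<in> {0..1} \<Longrightarrow> u s \<in> {0..1}"
  using u_range by blast

lemma D_pos: "v \<in> {0..1} \<Longrightarrow> 0 < D v"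
  using D_ge m_pos by (meson less_le_trans)

lemma D_continuous: "continuous_on {0..1} D"
  using D_deriv by (rule DERIV_continuous_on)

lemma continuous_on_D_powr: "continuous_on {0..1} (\<lambda>v. D v powr q)"
  using D_pos by (intro continuous_intros D_continuous) (metis atLeastAtMost_iff less_irrefl)

lemma c_p_nonneg: "0 \<le> c_p"
  unfolding c_p_def
  by (rule integral_nonneg[OF integrable_continuous_interval[OF continuous_on_D_powr]]) simp

lemma c_p_le: "c_p \<le> dyadic_const p C * m powr (1 - p)"
  unfolding c_p_def using p_gt_1 m_pos D_continuous D_ge measure_cond by (rule integral_powr_neg_le)

lemma integral_D_powr_le:
  "integral {0..1} (\<lambda>v. D v powr (p - 3)) \<le> dyadic_const (3 - p) C * m powr (p - 2)"
  using integral_powr_neg_le[OF _ m_pos D_continuous D_ge measure_cond, of "3 - p"] p_lt_2 by simp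

lemma u1_eq_c_p: "s \<in> {0..1} \<Longrightarrow> u1 s = c_p * D (u s) powr p"
  unfolding c_p_def by (rule u1_eq)

lemma u2_eq:
  assumes s: "s \<in> {0..1}"
  shows "u2 s = c_p * (p * D (u s) powr (p - 1) * (D' (u s) * u1 s))"
proof -
  have "(D has_real_derivative D' (u s)) (at (u s) within u ` {0..1})"
    using D_deriv[OF u_in[OF s]] u_range by (rule DERIV_subset)
  hence "((\<lambda>s. D (u s)) has_real_derivative D' (u s) * u1 s) (at s within {0..1})"
    using DERIV_image_chain[OF _ u_deriv[OF s]] by (simp add: o_def)
  hence "((\<lambda>s. D (u s) powr p) has_real_derivative
      p * D (u s) powr (p - 1) * (D' (u s) * u1 s)) (at s within {0..1})"
    by (rule DERIV_chain2[where f="\<lambda>z. z powr p" and g="\<lambda>s. D (u s)", OF has_real_derivative_powr[OF D_pos[OF u_in[OF s]]]])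
  hence "((\<lambda>s. c_p * D (u s) powr p) has_real_derivative
      c_p * (p * D (u s) powr (p - 1) * (D' (u s) * u1 s))) (at s within {0..1})"
    by (rule DERIV_cmult)
  hence "(u1 has_real_derivative c_p * (p * D (u s) powr (p - 1) * (D' (u s) * u1 s)))
      (at s within {0..1})"
    by (rule has_field_derivative_transform_within[where d=1]) (use s u1_eq_c_p in auto)
  thus ?thesis
    using has_field_derivative_unique[OF u1_deriv[OF s]] at_within_unit_interval_nontrivial[OF s]
    by blast
qed

lemma integrand_le:
  assumes s: "s \<in> {0..1}" and A: "0 \<le> A"
    and a1: "0 \<le> a1" "a1 \<le> \<bar>u1 s\<bar> * A" and a2: "a2 \<le> \<bar>u2 s\<bar> * A"
  shows "a2 / (D (u s))\<^sup>2 + a1\<^sup>2 / D (u s) ^ 3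
    \<le> c_p * A * (p * L + A) * (u1 s * D (u s) powr (p - 3))"
proof -
  define d where "d = D (u s)"
  define e where "e = d powr (p - 3)"
  have d: "0 < d" unfolding d_def by (rule D_pos[OF u_in[OF s]])
  have "d powr (p - 3 + k) = e * d ^ k" for k :: nat
    unfolding e_def using d by (simp add: powr_add powr_realpow)
  from this[of 3] this[of 2] have dp: "d powr p = e * d ^ 3" "d powr (p - 1) = e * d\<^sup>2"
    by (simp_all add: add.commute)
  have u1: "u1 s = c_p * e * d ^ 3" using u1_eq_c_p[OF s] unfolding d_def[symmetric] dp by simp
  have e: "0 \<le> e" unfolding e_def by simp
  have "\<bar>u2 s\<bar> = c_p\<^sup>2 * p * e\<^sup>2 * d ^ 5 * \<bar>D' (u s)\<bar>"
    unfolding u2_eq[OF s] d_def[symmetric] dp u1 using c_p_nonneg p_gt_1 d e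
    by (simp add: abs_mult power2_eq_square eval_nat_numeral)
  hence a2': "a2 \<le> c_p\<^sup>2 * p * e\<^sup>2 * d ^ 5 * \<bar>D' (u s)\<bar> * A" using a2 by simp
  have "\<bar>u1 s\<bar> = c_p * e * d ^ 3" using c_p_nonneg d e unfolding u1 by simp
  hence a1': "a1 \<le> c_p * e * d ^ 3 * A" using a1(2) by simp
  show ?thesis unfolding d_def[symmetric] e_def[symmetric] u1
    using p_gt_1 by (intro power_law_integrand_arith[OF d e c_p_nonneg _ A D'_bound[OF u_in[OF s]]
        a1(1) a1' a2']) simp
qed

lemma has_integral_u1_D_powr:
  "((\<lambda>s. u1 s * D (u s) powr (p - 3)) has_integral integral {0..1} (\<lambda>v. D v powr (p - 3))) {0..1}"
  using has_integral_substitution[where c=0 and d=1 and f="\<lambda>v. D v powr (p - 3)" and g=u and a=0 and b=1]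
    u_0 u_1 u_range continuous_on_D_powr u_deriv
  by simp

lemma boundary_term_le:
  assumes s: "s \<in> {0..1}" and A: "0 \<le> A" and a: "a \<le> \<bar>u1 s\<bar> * A"
  shows "a / (D (u s))\<^sup>2 \<le> A * dyadic_const p C / m"
proof -
  define d where "d = D (u s)"
  have d: "0 < d" "m \<le> d" unfolding d_def using D_pos D_ge u_in[OF s] by auto
  have "a / d\<^sup>2 \<le> \<bar>u1 s\<bar> * A / d\<^sup>2" using a by (simp add: divide_right_mono)
  also have "\<dots> = A * c_p * d powr (p - 2)"
    unfolding u1_eq_c_p[OF s] d_def[symmetric] using c_p_nonneg d
    by (simp add: abs_mult powr_diff powr_realpow)
  also have "\<dots> \<le> A * (dyadic_const p C * m powr (1 - p)) * m powr (p - 2)"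
    using A c_p_nonneg c_p_le d m_pos p_lt_2
    by (intro mult_mono mult_left_mono powr_mono2') auto
  also have "\<dots> = A * dyadic_const p C * (m powr (1 - p) * m powr (p - 2))" by simp
  also have "m powr (1 - p) * m powr (p - 2) = 1 / m"
    using m_pos by (simp add: powr_add[symmetric] powr_minus_divide)
  finally show ?thesis unfolding d_def by simp
qed

lemma integral_integrand_le:
  assumes A: "0 \<le> A" and a1: "\<And>s. s \<in> {0..1} \<Longrightarrow> 0 \<le> a1 s \<and> a1 s \<le> \<bar>u1 s\<bar> * A"
    and a2: "\<And>s. s \<in> {0..1} \<Longrightarrow> a2 s \<le> \<bar>u2 s\<bar> * A"
  shows "integral {0..1} (\<lambda>s. a2 s / (D (u s))\<^sup>2 + (a1 s)\<^sup>2 / D (u s) ^ 3)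
    \<le> A * (p * L + A) * dyadic_const p C * dyadic_const (3 - p) C / m"
proof -
  let ?F = "\<lambda>s. a2 s / (D (u s))\<^sup>2 + (a1 s)\<^sup>2 / D (u s) ^ 3"
  let ?G = "integral {0..1} (\<lambda>v. D v powr (p - 3))"
  have "0 \<le> L" using D'_bound[of 0] by simp
  hence K: "0 \<le> c_p * A * (p * L + A)" using c_p_nonneg A p_gt_1 by simp
  have G: "0 \<le> ?G"
    by (rule integral_nonneg[OF integrable_continuous_interval[OF continuous_on_D_powr]]) simp
  have "integral {0..1} ?F \<le> c_p * A * (p * L + A) * ?G"
  proof (cases "?F integrable_on {0..1}")
    case True
    have "integral {0..1} ?F \<le> integral {0..1} (\<lambda>s. c_p * A * (p * L + A) * (u1 s * D (u s) powr (p - 3)))"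
      using has_integral_integrable[OF has_integral_u1_D_powr]
      by (intro integral_le[OF True] integrable_on_mult_right integrand_le[OF _ A]) (auto simp: a1 a2)
    also have "\<dots> = c_p * A * (p * L + A) * ?G"
      using integral_unique[OF has_integral_u1_D_powr] by simp
    finally show ?thesis .
  qed (use K G in \<open>simp add: not_integrable_integral\<close>)
  also have "\<dots> \<le> A * (p * L + A) * ((dyadic_const p C * m powr (1 - p))
      * (dyadic_const (3 - p) C * m powr (p - 2)))"
  proof -
    have "0 \<le> dyadic_const p C * m powr (1 - p)"
      using dyadic_const_nonneg[OF p_gt_1 measure_condition_nonneg[OF measure_cond]] by simp
    hence "c_p * ?G \<le> (dyadic_const p C * m powr (1 - p)) * (dyadic_const (3 - p) C * m powr (p - 2))"
      by (rule mult_mono[OF c_p_le integral_D_powr_le _ G])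
    hence "A * (p * L + A) * (c_p * ?G) \<le> A * (p * L + A) * ((dyadic_const p C * m powr (1 - p))
        * (dyadic_const (3 - p) C * m powr (p - 2)))"
      using A \<open>0 \<le> L\<close> p_gt_1 by (intro mult_left_mono) auto
    thus ?thesis by (simp add: mult_ac)
  qed
  also have "\<dots> = A * (p * L + A) * dyadic_const p C * dyadic_const (3 - p) C
      * (m powr (1 - p) * m powr (p - 2))" by (simp add: mult_ac)
  also have "m powr (1 - p) * m powr (p - 2) = 1 / m"
    using m_pos by (simp add: powr_add[symmetric] powr_minus_divide)
  finally show ?thesis by simp
qed

lemma energy_le:
  assumes A: "0 \<le> A" and a1: "\<And>s. s \<in> {0..1} \<Longrightarrow> 0 \<le> a1 s \<and> a1 s \<le> \<bar>u1 s\<bar> * A"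
    and a2: "\<And>s. s \<in> {0..1} \<Longrightarrow> a2 s \<le> \<bar>u2 s\<bar> * A"
  shows "a1 0 / (D (u 0))\<^sup>2 + a1 1 / (D (u 1))\<^sup>2
      + integral {0..1} (\<lambda>s. a2 s / (D (u s))\<^sup>2 + (a1 s)\<^sup>2 / D (u s) ^ 3)
    \<le> A * dyadic_const p C * (2 + (p * L + A) * dyadic_const (3 - p) C) / m"
proof -
  have "a1 s / (D (u s))\<^sup>2 \<le> A * dyadic_const p C / m" if "s \<in> {0..1}" for s
    using a1[OF that] by (intro boundary_term_le[OF that A]) simp
  from this[of 0] this[of 1]
    have "a1 0 / (D (u 0))\<^sup>2 + a1 1 / (D (u 1))\<^sup>2 \<le> 2 * (A * dyadic_const p C / m)" by simp
  moreover have "integral {0..1} (\<lambda>s. a2 s / (D (u s))\<^sup>2 + (a1 s)\<^sup>2 / D (u s) ^ 3)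
      \<le> A * (p * L + A) * dyadic_const p C * dyadic_const (3 - p) C / m"
    using A a1 a2 by (rule integral_integrand_le)
  moreover have "A * dyadic_const p C * (2 + (p * L + A) * dyadic_const (3 - p) C) / m
      = 2 * (A * dyadic_const p C / m)
        + A * (p * L + A) * dyadic_const p C * dyadic_const (3 - p) C / m"
    by (simp add: algebra_simps add_divide_distrib)
  ultimately show ?thesis by linarith
qed

end

lemma opnorm_Hderiv_le: "opnorm n (Hderiv H0 H1 uk s) \<le> \<bar>uk s\<bar> * opnorm n (matdiff H1 H0)"
  unfolding Hderiv_def
  using opnorm_scale_le[of n "complex_of_real (uk s)" "matdiff H1 H0"] by (simp only: norm_of_real)

lemma continuous_attains_INF:
  fixes f :: "'a::topological_space \<Rightarrow> real"
  assumes "compact S" "S \<noteq> {}" "continuous_on S f"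
  obtains x0 where "x0 \<in> S" "(INF x\<in>S. f x) = f x0" "\<And>x. x \<in> S \<Longrightarrow> f x0 \<le> f x"
proof -
  obtain x0 where "x0 \<in> S" "\<And>x. x \<in> S \<Longrightarrow> f x0 \<le> f x"
    using continuous_attains_inf[OF assms] by blast
  moreover from this have "(INF x\<in>S. f x) = f x0" by (intro cInf_eq_minimum) auto
  ultimately show thesis using that by blast
qed

lemma sched_E_power_law_le:
  assumes p: "1 < p" "p < 2"
    and n: "2 \<le> n" and herm: "hermitian n H0" "hermitian n H1"
    and A: "opnorm n (matdiff H1 H0) = A"
    and simple: "\<forall>v\<in>{0..1}. lam1_simple n (Hint H0 H1 v)"
    and gap_pos: "\<forall>v\<in>{0..1}. gap n H0 H1 v > 0"
    and gap_deriv: "\<forall>v\<in>{0..1}. (gap n H0 H1 has_real_derivative D' v) (at v within {0..1})"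
    and mc: "measure_condition (gap n H0 H1) C"
    and u: "u 0 = 0" "u 1 = 1" "u ` {0..1} \<subseteq> {0..1}"
    and du: "\<forall>s\<in>{0..1}. (u has_real_derivative u1 s) (at s within {0..1})
                   \<and> (u1 has_real_derivative u2 s) (at s within {0..1})"
    and u1_eq: "\<forall>s\<in>{0..1}. u1 s = integral {0..1} (\<lambda>v. gap n H0 H1 v powr (-p))
                                * gap n H0 H1 (u s) powr p"
  shows "sched_E n H0 H1 u u1 u2
    \<le> A * dyadic_const p C * (2 + (2 * p + 1) * A * dyadic_const (3 - p) C) / min_gap n H0 H1"
proof -
  have A_nonneg: "0 \<le> A" using opnorm_nonneg A by metis
  have D'_bound: "\<bar>D' v\<bar> \<le> 2 * A" if v: "v \<in> {0..1}" for v
    using DERIV_abs_le_Lipschitz[OF _ gap_deriv[rule_format, OF v] at_within_unit_interval_nontrivial[OF v]]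
      gap_lipschitz[OF herm n] simple v A by blast
  obtain v0 where v0: "v0 \<in> {0..1}" "min_gap n H0 H1 = gap n H0 H1 v0"
    and min: "\<And>v. v \<in> {0..1} \<Longrightarrow> gap n H0 H1 v0 \<le> gap n H0 H1 v"
    using continuous_attains_INF[OF compact_Icc _ DERIV_continuous_on[of "{0..1}" "gap n H0 H1" D']]
      gap_deriv unfolding min_gap_def by auto
  have "power_law_schedule p C (2 * A) (min_gap n H0 H1) (gap n H0 H1) D' u u1 u2"
    using p v0 min gap_pos D'_bound gap_deriv mc u du u1_eq by unfold_locales auto
  hence "sched_E n H0 H1 u u1 u2 \<le> A * dyadic_const p C * (2 + (p * (2 * A) + A) * dyadic_const (3 - p) C)
      / min_gap n H0 H1"
    unfolding sched_E_def using A_nonneg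
    by (rule power_law_schedule.energy_le)
      (auto simp: A opnorm_Hderiv_le[of n H0 H1, unfolded A] opnorm_nonneg)
  thus ?thesis by (simp add: algebra_simps)
qed

theorem theorem2:
  fixes p C A :: real
  assumes "1 < p" and "p < 2" and "0 < C"
  shows "\<exists>B0::real. \<forall>(n::nat) H0 H1 (u::real \<Rightarrow> real) u1 u2.
     2 \<le> n \<and> hermitian n H0 \<and> hermitian n H1 \<and> opnorm n (matdiff H1 H0) = A
     \<and> (\<forall>v\<in>{0..1}. lam1_simple n (Hint H0 H1 v))
     \<and> (\<forall>v\<in>{0..1}. gap n H0 H1 v > 0)
     \<and> (\<exists>D'. (\<forall>v\<in>{0..1}. (gap n H0 H1 has_real_derivative D' v) (at v within {0..1}))
             \<and> continuous_on {0..1} D')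
     \<and> measure_condition (gap n H0 H1) C
     \<and> u 0 = 0 \<and> u 1 = 1 \<and> u ` {0..1} \<subseteq> {0..1} \<and> strict_mono_on {0..1} u
     \<and> (\<forall>s\<in>{0..1}. (u has_real_derivative u1 s) (at s within {0..1})
                   \<and> (u1 has_real_derivative u2 s) (at s within {0..1}))
     \<and> continuous_on {0..1} u2
     \<and> (\<forall>s\<in>{0..1}. u1 s = integral {0..1} (\<lambda>v. gap n H0 H1 v powr (-p))
                                * gap n H0 H1 (u s) powr p)
     \<longrightarrow> sched_E n H0 H1 u u1 u2 \<le> B0 / min_gap n H0 H1"
  by (intro exI allI impI, elim conjE exE) (rule sched_E_power_law_le[OF assms(1,2)]; assumption)

end
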